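(* Let $\bar k_0>0$ and, for each $k>\bar k_0$, let $(u_{1,k},u_{2,k})\in O_\varepsilon$ be an $L$-periodic solution of \[ \begin{cases}-u_1''=\mu_1(1-u_1)u_1-k\omega u_1u_2\\ -d u_2''=\mu_2(1-u_2)u_2-\alpha k\omega u_1u_2\end{cases} \] such that $(u_{1,k},u_{2,k})\to(v^+/\alpha,v^-/d)$ in $\mathscr{C}^{0,\frac12}$ as $k\to+\infty$. Let $(\varphi_k,\psi_k)$ be the positive $L$-periodic principal eigenfunction described in the context, normalized by $\max_{[0,L]}(\alpha\varphi_k+d\psi_k)=1$. Then for any $\epsilon'>0$ and $\delta>0$ there exists $\bar k>0$ such that \[ \sup_{\{v^->\epsilon'\}}\varphi_k+\sup_{\{v^+>\epsilon'\}}\psi_k\le\delta\qquad\text{for all }k\ge\bar k . \]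
   Context: Fix $L>0$, $\alpha>0$, $d>0$, positive $L$-periodic $\mu_1,\mu_2\in L^\infty(\mathbb{R})$ and a positive smooth $L$-periodic $\omega$. $v\in\mathscr{C}^{1,1}$ is a fixed $L$-periodic sign-changing solution of $-v''=\frac{\mu_1}{\alpha}(\alpha-v)v^+-\frac{\mu_2}{d^2}(d+v)v^-$; $z^+=\max(z,0)$, $z^-=-\min(z,0)$. $X=\mathscr{C}^{0,1/2}_{L\text{-per}}$, $\eta>0$ and $\varepsilon>0$ fixed, $O_\varepsilon=\{u\in X^2: u_1>0,\ u_2>0,\ \|\alpha u_1-du_2-v\|_{L^\infty}<\eta,\ \|u-(v^+/\alpha,v^-/d)\|_{X^2}<2\varepsilon\}$. $(\lambda_{1,k},(\varphi_k,\psi_k))$ is the periodic principal eigenpair of \[ -\begin{pmatrix}\frac{d^2}{dx^2}+\mu_1(1-2u_{1,k})-k\omega u_{2,k} & k\omega u_{1,k}\\ \alpha k\omega u_{2,k} & d\frac{d^2}{dx^2}+\mu_2(1-2u_{2,k})-\alpha k\omega u_{1,k}\end{pmatrix}, \] i.e. $\lambda_{1,k}$ is the unique real eigenvalue with an $L$-periodic eigenfunction $(\varphi_k,\psi_k)$ having $\varphi_k>0$, $\psi_k>0$. *)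

theory Defs
  imports "HOL-Analysis.Analysis"
begin

definition pospart :: "real \<Rightarrow> real" where "pospart z = max z 0"
definition negpart :: "real \<Rightarrow> real" where "negpart z = - min z 0"

definition L_periodic :: "real \<Rightarrow> (real \<Rightarrow> real) \<Rightarrow> bool" where
  "L_periodic L f \<longleftrightarrow> (\<forall>x. f (x + L) = f x)"

definition C11_second :: "(real \<Rightarrow> real) \<Rightarrow> (real \<Rightarrow> real) \<Rightarrow> bool" where
  "C11_second f w \<longleftrightarrow> (\<exists>f'. (\<forall>x. (f has_real_derivative f' x) (at x))
      \<and> (\<exists>C. \<forall>x y. \<bar>f' x - f' y\<bar> \<le> C * \<bar>x - y\<bar>)
      \<and> (AE x in lebesgue. (f' has_real_derivative w x) (at x)))"

definition smooth_fun :: "(real \<Rightarrow> real) \<Rightarrow> bool" where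
  "smooth_fun f \<longleftrightarrow> (\<forall>n x. ((deriv ^^ n) f) differentiable (at x))"

definition sup_norm :: "(real \<Rightarrow> real) \<Rightarrow> real" where
  "sup_norm f = Sup (range (\<lambda>x. \<bar>f x\<bar>))"

definition holder_quotients :: "(real \<Rightarrow> real) \<Rightarrow> real set" where
  "holder_quotients f = {\<bar>f x - f y\<bar> / \<bar>x - y\<bar> powr (1/2) | x y. x \<noteq> y}"

definition holder_norm :: "(real \<Rightarrow> real) \<Rightarrow> real" where
  "holder_norm f = sup_norm f + Sup (holder_quotients f)"

definition in_X :: "real \<Rightarrow> (real \<Rightarrow> real) \<Rightarrow> bool" where
  "in_X L f \<longleftrightarrow> L_periodic L f \<and> continuous_on UNIV f \<and> bounded (range f)
      \<and> bdd_above (holder_quotients f)"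

text \<open>Norm on X^2: maximum of the component norms.\<close>
definition O_eps :: "real \<Rightarrow> real \<Rightarrow> real \<Rightarrow> (real \<Rightarrow> real) \<Rightarrow> real \<Rightarrow> real
    \<Rightarrow> (real \<Rightarrow> real) \<Rightarrow> (real \<Rightarrow> real) \<Rightarrow> bool" where
  "O_eps L \<alpha> d v \<eta> \<epsilon> u1 u2 \<longleftrightarrow> in_X L u1 \<and> in_X L u2
     \<and> (\<forall>x. u1 x > 0) \<and> (\<forall>x. u2 x > 0)
     \<and> sup_norm (\<lambda>x. \<alpha> * u1 x - d * u2 x - v x) < \<eta>
     \<and> max (holder_norm (\<lambda>x. u1 x - pospart (v x) / \<alpha>))
           (holder_norm (\<lambda>x. u2 x - negpart (v x) / d)) < 2 * \<epsilon>"

definition sup_over :: "real set \<Rightarrow> (real \<Rightarrow> real) \<Rightarrow> real" where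
  "sup_over S f = (if S = {} then 0 else Sup (f ` S))"

end

theory Submission
  imports Defs
begin

(* First, lambda_k <= sup |mu1| sup u1 uniformly in k: a larger lambda would make phi a positive
   periodic strict supersolution of -y'' + P y = 0 with P = k omega u2 - mu1 (1 - u1), an equation
   which has the positive periodic solution u1, and the largest multiple of u1 below phi would touch
   phi at a point where their difference is strictly concave.
   Near a point where v < -epsilon', the convergence gives u1 <= theta small and u2 >= c > 0 on a
   ball of fixed radius r, so the absorption term k omega u2 phi dominates for k large. Since the
   normalization gives phi <= 1/alpha, comparison with the parabola s + (t - x0)^2 / (alpha r^2)
   forces phi (x0) <= s. Exchanging the roles of the two components handles psi where v > epsilon'. *)

section \<open>Periodic functions\<close>

lemma L_periodic_shift_nat:
  assumes "L_periodic L f"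
  shows "f (x + real n * L) = f x"
proof (induction n)
  case (Suc n)
  have "f (x + real (Suc n) * L) = f ((x + real n * L) + L)" by (simp add: algebra_simps)
  also have "\<dots> = f (x + real n * L)" using assms unfolding L_periodic_def by blast
  finally show ?case using Suc by simp
qed simp

lemma L_periodic_range:
  assumes "L > 0" and "L_periodic L f"
  shows "range f = f ` {0..L}"
proof -
  have "f x \<in> f ` {0..L}" for x
  proof -
    define n where "n = \<lfloor>x / L\<rfloor>"
    define y where "y = x - of_int n * L"
    have "of_int n \<le> x / L" "x / L < of_int n + 1" unfolding n_def by linarith+
    then have "of_int n * L \<le> x" "x < (of_int n + 1) * L"
      using \<open>L > 0\<close> by (simp_all add: le_divide_eq divide_less_eq)
    then have "0 \<le> y" "y \<le> L" unfolding y_def by (simp_all add: algebra_simps)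
    moreover have "f x = f y"
    proof (cases "n \<ge> 0")
      case True
      then have "x = y + real (nat n) * L" unfolding y_def by simp
      then show ?thesis using L_periodic_shift_nat[OF assms(2)] by metis
    next
      case False
      then have "y = x + real (nat (- n)) * L" unfolding y_def by simp
      then show ?thesis using L_periodic_shift_nat[OF assms(2)] by metis
    qed
    ultimately show ?thesis by auto
  qed
  then show ?thesis by auto
qed

lemma L_periodic_attains_inf:
  assumes "L > 0" and "L_periodic L f" and "continuous_on UNIV f"
  obtains x0 where "\<And>x. f x0 \<le> f x"
proof -
  have "continuous_on {0..L} f" using assms(3) continuous_on_subset by blast
  moreover have "{0..L} \<noteq> {}" using \<open>L > 0\<close> by simp
  ultimately obtain x0 where x0: "\<forall>y\<in>{0..L}. f x0 \<le> f y"
    using continuous_attains_inf[OF compact_Icc] by blast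
  have "f x0 \<le> f x" for x
  proof -
    have "f x \<in> f ` {0..L}" using L_periodic_range[OF assms(1,2)] by blast
    then obtain y where "y \<in> {0..L}" "f x = f y" by blast
    then show ?thesis using x0 by simp
  qed
  then show ?thesis by (rule that)
qed

lemma L_periodic_attains_sup:
  assumes "L > 0" and "L_periodic L f" and "continuous_on UNIV f"
  obtains x0 where "\<And>x. f x \<le> f x0"
proof -
  have "L_periodic L (\<lambda>x. - f x)" using assms(2) unfolding L_periodic_def by simp
  moreover have "continuous_on UNIV (\<lambda>x. - f x)" using assms(3) by (intro continuous_intros)
  ultimately obtain x0 where "\<And>x. - f x0 \<le> - f x" using L_periodic_attains_inf[OF assms(1)] by blast
  then show ?thesis by (intro that) simp
qed

section \<open>Lipschitz functions with almost everywhere positive derivative\<close>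

lemma lipschitz_continuous_on:
  fixes g :: "real \<Rightarrow> real"
  assumes "\<forall>x y. \<bar>g x - g y\<bar> \<le> C * \<bar>x - y\<bar>"
  shows "continuous_on S g"
proof -
  have "C-lipschitz_on UNIV g"
    using assms assms[rule_format, of 0 1] by (intro lipschitz_onI) (auto simp: dist_real_def)
  then show ?thesis using lipschitz_on_continuous_on continuous_on_subset by blast
qed

lemma last_crossing:
  fixes g :: "real \<Rightarrow> real"
  assumes "continuous_on {a..b} g" and "a \<le> b" and "g b < y" and "y \<le> g a"
  obtains x where "a \<le> x" "x < b" "g x = y" "\<And>t. x < t \<Longrightarrow> t \<le> b \<Longrightarrow> g t < y"
proof -
  define S where "S = {t \<in> {a..b}. g t = y}"
  have ivt: "\<exists>x\<in>{p..b}. g x = y" if "a \<le> p" "p \<le> b" "y \<le> g p" for p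
  proof -
    have "continuous_on {p..b} g" using continuous_on_subset[OF assms(1)] that(1) by auto
    then show ?thesis using IVT2'[of g b y p] that(2,3) assms(3) by auto
  qed
  have "S \<noteq> {}" using ivt[of a] assms unfolding S_def by auto
  moreover have "closed S"
    unfolding S_def using assms(1) by (intro continuous_closed_preimage_constant) auto
  moreover have "bdd_above S" unfolding S_def by auto
  ultimately have xS: "Sup S \<in> S" using closed_contains_Sup by blast
  then have "a \<le> Sup S" "Sup S \<le> b" "g (Sup S) = y" unfolding S_def by auto
  show ?thesis
  proof (rule that)
    show "a \<le> Sup S" "g (Sup S) = y" by fact+
    show "Sup S < b" using \<open>Sup S \<le> b\<close> \<open>g (Sup S) = y\<close> assms(3) by (cases "Sup S = b") auto
    show "g t < y" if t: "Sup S < t" "t \<le> b" for t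
    proof (rule ccontr)
      have "a \<le> t" using \<open>a \<le> Sup S\<close> t by simp
      moreover assume "\<not> g t < y"
      ultimately obtain z where z: "z \<in> {t..b}" "g z = y" using ivt[OF _ t(2)] by (meson not_less)
      then have "z \<in> S" using \<open>a \<le> t\<close> unfolding S_def by auto
      then show False using cSup_upper[OF _ \<open>bdd_above S\<close>, of z] z(1) t(1) by simp
    qed
  qed
qed

lemma lipschitz_le_if_ae_deriv_pos:
  fixes g :: "real \<Rightarrow> real"
  assumes lip: "\<forall>x y. \<bar>g x - g y\<bar> \<le> C * \<bar>x - y\<bar>" and "a < b" and "negligible N"
    and der: "\<And>t. a < t \<Longrightarrow> t < b \<Longrightarrow> t \<notin> N \<Longrightarrow> \<exists>D>0. (g has_real_derivative D) (at t)"
  shows "g a \<le> g b"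
proof (rule ccontr)
  assume "\<not> g a \<le> g b"
  \<comment> \<open>Each value between \<open>g b\<close> and \<open>g a\<close> is taken at its last crossing, which cannot be a point of
    positive derivative, so lies in \<open>N\<close>; but the Lipschitz image of \<open>N\<close> is null.\<close>
  have cont: "continuous_on {a..b} g" by (rule lipschitz_continuous_on[OF lip])
  have "negligible (g ` (N \<inter> {a<..<b}))"
  proof (rule negligible_locally_Lipschitz_image)
    show "negligible (N \<inter> {a<..<b})" using \<open>negligible N\<close> negligible_Int by blast
    show "\<exists>T B. open T \<and> x \<in> T \<and> (\<forall>y\<in>N \<inter> {a<..<b} \<inter> T. norm (g y - g x) \<le> B * norm (y - x))"
      for x by (rule exI[of _ UNIV], rule exI[of _ C]) (use lip in auto)
  qed simp
  moreover have "{g b<..<g a} \<subseteq> g ` (N \<inter> {a<..<b})"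
  proof
    fix y assume "y \<in> {g b<..<g a}"
    then obtain x where x: "a \<le> x" "x < b" "g x = y" and after: "\<And>t. x < t \<Longrightarrow> t \<le> b \<Longrightarrow> g t < y"
      using last_crossing[OF cont, of y] \<open>a < b\<close> by auto
    have "a < x" using x \<open>y \<in> {g b<..<g a}\<close> by (cases "x = a") auto
    moreover have "x \<in> N"
    proof (rule ccontr)
      assume "x \<notin> N"
      then obtain D where "D > 0" "(g has_real_derivative D) (at x)" using der \<open>a < x\<close> x(2) by blast
      then obtain e where "e > 0" and e: "\<And>h. 0 < h \<Longrightarrow> h < e \<Longrightarrow> g x < g (x + h)"
        using DERIV_pos_inc_right by blast
      define h where "h = min e (b - x) / 2"
      have "0 < h" "h < e" "x + h \<le> b"
        unfolding h_def using \<open>e > 0\<close> x(2) by (auto simp: min_def field_simps)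
      then show False using e[of h] after[of "x + h"] x(3) by simp
    qed
    ultimately show "y \<in> g ` (N \<inter> {a<..<b})" using x by auto
  qed
  ultimately have "negligible {g b<..<g a}" by (rule negligible_subset)
  then show False using open_not_negligible[of "{g b<..<g a}"] \<open>\<not> g a \<le> g b\<close> by simp
qed

lemma lipschitz_less_if_ae_deriv_pos:
  fixes g :: "real \<Rightarrow> real"
  assumes lip: "\<forall>x y. \<bar>g x - g y\<bar> \<le> C * \<bar>x - y\<bar>" and "a < b" and N: "negligible N"
    and der: "\<And>t. a < t \<Longrightarrow> t < b \<Longrightarrow> t \<notin> N \<Longrightarrow> \<exists>D>0. (g has_real_derivative D) (at t)"
  shows "g a < g b"
proof -
  have "\<not> {a<..<b} \<subseteq> N"
    using negligible_subset[OF N] open_not_negligible[of "{a<..<b}"] \<open>a < b\<close> by auto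
  then obtain t where "t \<in> {a<..<b}" "t \<notin> N" by blast
  then have t: "a < t" "t < b" "t \<notin> N" by auto
  then obtain D where "D > 0" "(g has_real_derivative D) (at t)" using der by blast
  then obtain e where "e > 0" and e: "\<And>h. 0 < h \<Longrightarrow> h < e \<Longrightarrow> g t < g (t + h)"
    using DERIV_pos_inc_right by blast
  define h where "h = min e (b - t) / 2"
  have h: "0 < h" "h < e" "t + h < b"
    unfolding h_def using \<open>e > 0\<close> t by (auto simp: min_def field_simps)
  have "g a \<le> g t" by (rule lipschitz_le_if_ae_deriv_pos[OF lip \<open>a < t\<close> N]) (use der t in auto)
  also have "\<dots> < g (t + h)" using e h by simp
  also have "\<dots> \<le> g b" by (rule lipschitz_le_if_ae_deriv_pos[OF lip \<open>t + h < b\<close> N]) (use der t h in auto)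
  finally show ?thesis .
qed

section \<open>Comparison principles\<close>

lemma AE_lebesgue_negligibleE:
  assumes "AE x in lebesgue. P x"
  obtains N where "negligible N" and "\<And>x. x \<notin> N \<Longrightarrow> P x"
proof -
  obtain N where P: "\<And>x. x \<in> space lebesgue - N \<Longrightarrow> P x" and "N \<in> null_sets lebesgue"
    using AE_E3[OF assms] by metis
  show ?thesis
  proof (rule that)
    show "negligible N" using \<open>N \<in> null_sets lebesgue\<close> by (simp add: negligible_iff_null_sets)
    show "P x" if "x \<notin> N" for x using P that by simp
  qed
qed

lemma C11_secondE:
  assumes "C11_second f w"
  obtains f' C where "\<And>x. (f has_real_derivative f' x) (at x)"
    and "\<forall>x y. \<bar>f' x - f' y\<bar> \<le> C * \<bar>x - y\<bar>"
    and "AE x in lebesgue. (f' has_real_derivative w x) (at x)"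
  using assms unfolding C11_second_def by auto

lemma C11_second_continuous_on: "C11_second f w \<Longrightarrow> continuous_on S f"
  unfolding C11_second_def
  by (meson DERIV_isCont continuous_at_imp_continuous_on)

lemma L_periodic_C11_lipschitz_bounded:
  fixes v :: "real \<Rightarrow> real"
  assumes "L > 0" and "L_periodic L v" and "C11_second v w"
  obtains C B where "\<forall>x y. \<bar>v x - v y\<bar> \<le> C * \<bar>x - y\<bar>" and "\<And>x. \<bar>v x\<bar> \<le> B"
proof -
  obtain v' Cv where dv: "\<And>x. (v has_real_derivative v' x) (at x)"
    and lip: "\<forall>x y. \<bar>v' x - v' y\<bar> \<le> Cv * \<bar>x - y\<bar>"
    and "AE t in lebesgue. (v' has_real_derivative w t) (at t)"
    using \<open>C11_second v w\<close> by (erule C11_secondE)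
  have "v' (x + L) = v' x" for x
  proof -
    have "((\<lambda>t. v (t + L)) has_real_derivative v' (x + L)) (at x)" using dv DERIV_shift by blast
    moreover have "(\<lambda>t. v (t + L)) = v" using \<open>L_periodic L v\<close> unfolding L_periodic_def by auto
    ultimately have "(v has_real_derivative v' (x + L)) (at x)" by simp
    then show ?thesis by (rule DERIV_unique[OF _ dv])
  qed
  then have "L_periodic L (\<lambda>x. \<bar>v' x\<bar>)" unfolding L_periodic_def by simp
  moreover have "continuous_on UNIV (\<lambda>x. \<bar>v' x\<bar>)"
    using lipschitz_continuous_on[OF lip] by (intro continuous_intros)
  ultimately obtain m where m: "\<And>x. \<bar>v' x\<bar> \<le> \<bar>v' m\<bar>" using L_periodic_attains_sup[OF \<open>L > 0\<close>] by blast
  have "L_periodic L (\<lambda>x. \<bar>v x\<bar>)" using \<open>L_periodic L v\<close> unfolding L_periodic_def by simp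
  moreover have "isCont v x" for x using dv by (rule DERIV_isCont)
  then have "continuous_on UNIV (\<lambda>x. \<bar>v x\<bar>)"
    by (intro continuous_at_imp_continuous_on ballI continuous_intros)
  ultimately obtain b where b: "\<And>x. \<bar>v x\<bar> \<le> \<bar>v b\<bar>" using L_periodic_attains_sup[OF \<open>L > 0\<close>] by blast
  have lip_lt: "\<bar>v x - v y\<bar> \<le> \<bar>v' m\<bar> * \<bar>x - y\<bar>" if "x < y" for x y
  proof -
    obtain z where "v y - v x = (y - x) * v' z" using MVT2[OF \<open>x < y\<close>] dv by blast
    then have "\<bar>v x - v y\<bar> = \<bar>(y - x) * v' z\<bar>" by (metis abs_minus_commute)
    also have "\<dots> = \<bar>v' z\<bar> * \<bar>x - y\<bar>" by (simp add: abs_mult abs_minus_commute)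
    also have "\<dots> \<le> \<bar>v' m\<bar> * \<bar>x - y\<bar>" using m[of z] by (simp add: mult_right_mono)
    finally show ?thesis .
  qed
  have "\<bar>v x - v y\<bar> \<le> \<bar>v' m\<bar> * \<bar>x - y\<bar>" for x y
    using lip_lt[of x y] lip_lt[of y x] by (cases x y rule: linorder_cases) (auto simp: abs_minus_commute)
  then show ?thesis using that b by blast
qed

lemma max_principle_Icc:
  fixes z z' :: "real \<Rightarrow> real"
  assumes dz: "\<And>x. (z has_real_derivative z' x) (at x)"
    and lip: "\<forall>x y. \<bar>z' x - z' y\<bar> \<le> C * \<bar>x - y\<bar>"
    and "a < b" and "z a < 0" and "z b < 0" and N: "negligible N"
    and convex: "\<And>t. a < t \<Longrightarrow> t < b \<Longrightarrow> t \<notin> N \<Longrightarrow> z t > 0 \<Longrightarrow>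
                   \<exists>D>0. (z' has_real_derivative D) (at t)"
    and "x \<in> {a..b}"
  shows "z x \<le> 0"
proof (rule ccontr)
  assume "\<not> z x \<le> 0"
  have isc: "isCont z t" for t using dz DERIV_isCont by blast
  then have "continuous_on {a..b} z" by (simp add: continuous_at_imp_continuous_on)
  moreover have "{a..b} \<noteq> {}" using \<open>a < b\<close> by simp
  ultimately obtain p where p: "p \<in> {a..b}" "\<forall>y\<in>{a..b}. z y \<le> z p"
    using continuous_attains_sup[OF compact_Icc] by blast
  have "z p > 0" using p(2) \<open>x \<in> {a..b}\<close> \<open>\<not> z x \<le> 0\<close> by force
  then have "a < p" "p < b" using p(1) \<open>z a < 0\<close> \<open>z b < 0\<close> by (auto simp: le_less)
  have "z' p = 0"
  proof (rule DERIV_local_max[OF dz])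
    show "0 < min (p - a) (b - p)" using \<open>a < p\<close> \<open>p < b\<close> by simp
    show "\<forall>y. \<bar>p - y\<bar> < min (p - a) (b - p) \<longrightarrow> z y \<le> z p" using p(2) by (auto simp: abs_less_iff)
  qed
  have "eventually (\<lambda>y. 0 < z y) (at p)"
    using isc[of p] \<open>z p > 0\<close> order_tendstoD(1) by (auto simp: isCont_def)
  then obtain e where "e > 0" and e: "\<And>y. y \<noteq> p \<Longrightarrow> dist y p < e \<Longrightarrow> 0 < z y"
    unfolding eventually_at by auto
  define q where "q = p + min e (b - p) / 2"
  have q: "p < q" "q < b" "q - p < e" unfolding q_def using \<open>e > 0\<close> \<open>p < b\<close> by (auto simp: min_def field_simps)
  have z'_pos: "z' s > 0" if "p < s" "s \<le> q" for s
  proof -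
    have "z' p < z' s"
    proof (rule lipschitz_less_if_ae_deriv_pos[OF lip \<open>p < s\<close> N])
      fix t assume "p < t" "t < s" "t \<notin> N"
      moreover have "0 < z t" using e[of t] \<open>p < t\<close> \<open>t < s\<close> that q by (simp add: dist_real_def)
      ultimately show "\<exists>D>0. (z' has_real_derivative D) (at t)"
        using convex \<open>a < p\<close> that q by simp
    qed
    then show ?thesis using \<open>z' p = 0\<close> by simp
  qed
  obtain \<xi> where "p < \<xi>" "\<xi> < q" "z q - z p = (q - p) * z' \<xi>"
    using MVT2[OF \<open>p < q\<close>] dz by blast
  moreover have "(q - p) * z' \<xi> > 0" using z'_pos \<open>p < \<xi>\<close> \<open>\<xi> < q\<close> q by simp
  moreover have "z q \<le> z p" using p(2) q \<open>a < p\<close> by simp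
  ultimately show False by simp
qed

lemma C11_le_if_second_deriv_large:
  fixes f w :: "real \<Rightarrow> real"
  assumes "C11_second f w" and "r > 0" and "s > 0" and "M \<ge> 0"
    and "f (x0 - r) \<le> M" and "f (x0 + r) \<le> M"
    and large: "AE t in lebesgue. \<bar>t - x0\<bar> < r \<longrightarrow> s < f t \<longrightarrow> 2 * M / r\<^sup>2 < w t"
  shows "f x0 \<le> s"
proof -
  obtain f' C where df: "\<And>x. (f has_real_derivative f' x) (at x)"
    and lip: "\<forall>x y. \<bar>f' x - f' y\<bar> \<le> C * \<bar>x - y\<bar>"
    and ddf: "AE t in lebesgue. (f' has_real_derivative w t) (at t)"
    using \<open>C11_second f w\<close> by (erule C11_secondE)
  define A where "A = M / r\<^sup>2"
  have "A \<ge> 0" unfolding A_def using \<open>M \<ge> 0\<close> by simp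
  \<comment> \<open>The parabolic barrier \<open>s + A (t - x0)\<^sup>2\<close> dominates \<open>f\<close> at \<open>x0 \<plusminus> r\<close>.\<close>
  define z where "z t = f t - s - A * (t - x0)\<^sup>2" for t
  define z' where "z' t = f' t - 2 * A * (t - x0)" for t
  have dz: "(z has_real_derivative z' x) (at x)" for x
    unfolding z_def[abs_def] z'_def by (auto intro!: derivative_eq_intros df)
  have lipz: "\<forall>x y. \<bar>z' x - z' y\<bar> \<le> (C + 2 * A) * \<bar>x - y\<bar>"
  proof (intro allI)
    fix x y
    have "\<bar>z' x - z' y\<bar> \<le> \<bar>f' x - f' y\<bar> + \<bar>2 * A * (x - y)\<bar>"
      unfolding z'_def by (simp add: algebra_simps abs_triangle_ineq4)
    also have "\<dots> \<le> C * \<bar>x - y\<bar> + 2 * A * \<bar>x - y\<bar>" using lip \<open>A \<ge> 0\<close> by (simp add: abs_mult)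
    also have "\<dots> = (C + 2 * A) * \<bar>x - y\<bar>" by (simp add: algebra_simps)
    finally show "\<bar>z' x - z' y\<bar> \<le> (C + 2 * A) * \<bar>x - y\<bar>" .
  qed
  have "AE t in lebesgue. (f' has_real_derivative w t) (at t)
      \<and> (\<bar>t - x0\<bar> < r \<longrightarrow> s < f t \<longrightarrow> 2 * A < w t)"
    using ddf large by eventually_elim (simp add: A_def)
  then obtain N where "negligible N" and N: "\<And>t. t \<notin> N \<Longrightarrow> (f' has_real_derivative w t) (at t)
      \<and> (\<bar>t - x0\<bar> < r \<longrightarrow> s < f t \<longrightarrow> 2 * A < w t)"
    by (erule AE_lebesgue_negligibleE)
  have "z x0 \<le> 0"
  proof (rule max_principle_Icc[OF dz lipz _ _ _ \<open>negligible N\<close>])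
    have "A * r\<^sup>2 = M" unfolding A_def using \<open>r > 0\<close> by simp
    then show "z (x0 - r) < 0" "z (x0 + r) < 0"
      unfolding z_def using assms(3,5,6) by simp_all
    fix t assume t: "x0 - r < t" "t < x0 + r" "t \<notin> N" "z t > 0"
    moreover have "A * (t - x0)\<^sup>2 \<ge> 0" using \<open>A \<ge> 0\<close> by simp
    ultimately have "s < f t" unfolding z_def by linarith
    then have "2 * A < w t" and dft: "(f' has_real_derivative w t) (at t)" using N t by auto
    have "(z' has_real_derivative w t - 2 * A) (at t)"
      unfolding z'_def by (auto intro!: derivative_eq_intros dft)
    then show "\<exists>D>0. (z' has_real_derivative D) (at t)" using \<open>2 * A < w t\<close> by (intro exI[of _ "w t - 2 * A"]) simp
  qed (use \<open>r > 0\<close> in auto)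
  then show ?thesis unfolding z_def by simp
qed

lemma nonneg_zero_not_strictly_concave_right:
  fixes w w' :: "real \<Rightarrow> real"
  assumes dw: "\<And>x. (w has_real_derivative w' x) (at x)"
    and lip: "\<forall>x y. \<bar>w' x - w' y\<bar> \<le> C * \<bar>x - y\<bar>"
    and nonneg: "\<And>x. 0 \<le> w x" and "w x0 = 0" and "e > 0" and N: "negligible N"
    and concave: "\<And>t. x0 < t \<Longrightarrow> t < x0 + e \<Longrightarrow> t \<notin> N \<Longrightarrow>
                    \<exists>D<0. (w' has_real_derivative D) (at t)"
  shows False
proof -
  have "w' x0 = 0"
    by (rule DERIV_local_min[OF dw zero_less_one]) (use nonneg \<open>w x0 = 0\<close> in simp)
  have lip_neg: "\<forall>x y. \<bar>- w' x - - w' y\<bar> \<le> C * \<bar>x - y\<bar>" using lip by (simp add: abs_minus_commute)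
  have w'_neg: "w' t < 0" if t: "x0 < t" "t < x0 + e" for t
  proof -
    have "- w' x0 < - w' t"
    proof (rule lipschitz_less_if_ae_deriv_pos[OF lip_neg \<open>x0 < t\<close> N])
      fix y assume "x0 < y" "y < t" "y \<notin> N"
      moreover have "y < x0 + e" using \<open>y < t\<close> t(2) by simp
      ultimately obtain D where "D < 0" "(w' has_real_derivative D) (at y)" using concave by blast
      then have "((\<lambda>x. - w' x) has_real_derivative - D) (at y)" by (intro derivative_intros)
      then show "\<exists>D>0. ((\<lambda>x. - w' x) has_real_derivative D) (at y)" using \<open>D < 0\<close> by (intro exI[of _ "- D"]) simp
    qed
    then show ?thesis using \<open>w' x0 = 0\<close> by simp
  qed
  define s where "s = x0 + e / 2"
  have "x0 < s" "s < x0 + e" unfolding s_def using \<open>e > 0\<close> by auto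
  then obtain \<xi> where "x0 < \<xi>" "\<xi> < s" "w s - w x0 = (s - x0) * w' \<xi>"
    using MVT2[OF \<open>x0 < s\<close>] dw by blast
  moreover have "(s - x0) * w' \<xi> < 0"
    using w'_neg[of \<xi>] \<open>x0 < \<xi>\<close> \<open>\<xi> < s\<close> \<open>s < x0 + e\<close> by (simp add: mult_pos_neg)
  ultimately show False using nonneg[of s] \<open>w x0 = 0\<close> by simp
qed

lemma positive_periodic_solution_excludes_strict_supersolution:
  fixes f u gf gu P :: "real \<Rightarrow> real"
  assumes "L > 0" and "L_periodic L f" and "L_periodic L u"
    and f_pos: "\<And>x. f x > 0" and u_pos: "\<And>x. u x > 0"
    and "C11_second f gf" and "C11_second u gu"
    and P: "\<And>t. \<bar>P t\<bar> \<le> B" and "\<beta> > 0"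
    and super: "AE t in lebesgue. gf t \<le> (P t - \<beta>) * f t"
    and sol: "AE t in lebesgue. gu t = P t * u t"
  shows False
proof -
  obtain f' Cf where df: "\<And>x. (f has_real_derivative f' x) (at x)"
    and lipf: "\<forall>x y. \<bar>f' x - f' y\<bar> \<le> Cf * \<bar>x - y\<bar>"
    and ddf: "AE t in lebesgue. (f' has_real_derivative gf t) (at t)"
    using \<open>C11_second f gf\<close> by (erule C11_secondE)
  obtain u' Cu where du: "\<And>x. (u has_real_derivative u' x) (at x)"
    and lipu: "\<forall>x y. \<bar>u' x - u' y\<bar> \<le> Cu * \<bar>x - y\<bar>"
    and ddu: "AE t in lebesgue. (u' has_real_derivative gu t) (at t)"
    using \<open>C11_second u gu\<close> by (erule C11_secondE)
  have cont_f: "isCont f x" and cont_u: "isCont u x" for x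
    using df du DERIV_isCont by blast+
  have "isCont (\<lambda>x. f x / u x) x" for x
    using cont_f cont_u u_pos[of x] by (intro continuous_intros) auto
  then have "continuous_on UNIV (\<lambda>x. f x / u x)" by (simp add: continuous_at_imp_continuous_on)
  moreover have "L_periodic L (\<lambda>x. f x / u x)"
    using \<open>L_periodic L f\<close> \<open>L_periodic L u\<close> unfolding L_periodic_def by simp
  ultimately obtain xs where xs: "\<And>x. f xs / u xs \<le> f x / u x"
    using L_periodic_attains_inf[OF \<open>L > 0\<close>] by blast
  \<comment> \<open>\<open>\<tau> u\<close> is the largest multiple of \<open>u\<close> below \<open>f\<close>; it touches \<open>f\<close> at \<open>xs\<close>.\<close>
  define \<tau> where "\<tau> = f xs / u xs"
  define w where "w x = f x - \<tau> * u x" for x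
  define w' where "w' x = f' x - \<tau> * u' x" for x
  have "\<tau> > 0" unfolding \<tau>_def using f_pos u_pos by simp
  have w_nonneg: "0 \<le> w x" for x
    using xs[of x] u_pos[of x] unfolding w_def \<tau>_def by (simp add: le_divide_eq)
  have "w xs = 0" unfolding w_def \<tau>_def using u_pos[of xs] by simp
  have dw: "(w has_real_derivative w' x) (at x)" for x
    unfolding w_def[abs_def] w'_def by (auto intro!: derivative_eq_intros df du)
  have lipw: "\<forall>x y. \<bar>w' x - w' y\<bar> \<le> (Cf + \<tau> * Cu) * \<bar>x - y\<bar>"
  proof (intro allI)
    fix x y
    have "\<bar>w' x - w' y\<bar> = \<bar>(f' x - f' y) - \<tau> * (u' x - u' y)\<bar>"
      unfolding w'_def by (simp add: algebra_simps)
    also have "\<dots> \<le> \<bar>f' x - f' y\<bar> + \<tau> * \<bar>u' x - u' y\<bar>"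
      using abs_triangle_ineq4[of "f' x - f' y" "\<tau> * (u' x - u' y)"] \<open>\<tau> > 0\<close>
      by (simp add: abs_mult)
    also have "\<dots> \<le> Cf * \<bar>x - y\<bar> + \<tau> * (Cu * \<bar>x - y\<bar>)"
      using lipf lipu \<open>\<tau> > 0\<close> by (intro add_mono mult_left_mono) auto
    finally show "\<bar>w' x - w' y\<bar> \<le> (Cf + \<tau> * Cu) * \<bar>x - y\<bar>" by (simp add: algebra_simps)
  qed
  have "AE t in lebesgue. (f' has_real_derivative gf t) (at t) \<and> (u' has_real_derivative gu t) (at t)
      \<and> gf t \<le> (P t - \<beta>) * f t \<and> gu t = P t * u t"
    using ddf ddu super sol by eventually_elim blast
  then obtain N where "negligible N" and N: "\<And>t. t \<notin> N \<Longrightarrow>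
      (f' has_real_derivative gf t) (at t) \<and> (u' has_real_derivative gu t) (at t)
      \<and> gf t \<le> (P t - \<beta>) * f t \<and> gu t = P t * u t"
    by (erule AE_lebesgue_negligibleE)
  define c where "c = \<beta> * f xs / 4"
  have "c > 0" unfolding c_def using \<open>\<beta> > 0\<close> f_pos by simp
  have "((\<lambda>t. B * w t) \<longlongrightarrow> B * w xs) (at xs)"
    unfolding w_def using cont_f[of xs] cont_u[of xs] by (intro tendsto_intros) (auto simp: isCont_def)
  then have "eventually (\<lambda>t. B * w t < c) (at xs)"
    using order_tendstoD(2)[of _ "B * w xs" _ c] \<open>w xs = 0\<close> \<open>c > 0\<close> by simp
  moreover have "(f \<longlongrightarrow> f xs) (at xs)" using cont_f[of xs] by (simp add: isCont_def)
  then have "eventually (\<lambda>t. f xs / 2 < f t) (at xs)"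
    using order_tendstoD(1)[of _ "f xs" _ "f xs / 2"] f_pos[of xs] by simp
  ultimately have "eventually (\<lambda>t. B * w t < c \<and> f xs / 2 < f t) (at xs)"
    by eventually_elim simp
  then obtain e where "e > 0" and near: "\<And>t. t \<noteq> xs \<Longrightarrow> dist t xs < e \<Longrightarrow> B * w t < c \<and> f xs / 2 < f t"
    unfolding eventually_at by auto
  show False
  proof (rule nonneg_zero_not_strictly_concave_right[OF dw lipw w_nonneg \<open>w xs = 0\<close> \<open>e > 0\<close> \<open>negligible N\<close>])
    fix t assume "xs < t" "t < xs + e" "t \<notin> N"
    then have near_t: "B * w t < c" "f xs / 2 < f t" using near[of t] by (auto simp: dist_real_def)
    have Nt: "(f' has_real_derivative gf t) (at t)" "(u' has_real_derivative gu t) (at t)"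
      "gf t \<le> (P t - \<beta>) * f t" "gu t = P t * u t" using N[OF \<open>t \<notin> N\<close>] by blast+
    have "gf t - \<tau> * gu t \<le> P t * w t - \<beta> * f t"
      using Nt(3,4) unfolding w_def by (simp add: algebra_simps)
    also have "\<dots> \<le> B * w t - \<beta> * f t"
      using mult_right_mono[OF abs_le_D1[OF P[of t]] w_nonneg[of t]] by simp
    also have "\<dots> < c - \<beta> * (f xs / 2)"
      using near_t mult_strict_left_mono[OF near_t(2) \<open>\<beta> > 0\<close>] by simp
    also have "\<dots> < 0" unfolding c_def using \<open>\<beta> > 0\<close> f_pos[of xs] by simp
    finally have "gf t - \<tau> * gu t < 0" .
    moreover have "(w' has_real_derivative gf t - \<tau> * gu t) (at t)"
      unfolding w'_def[abs_def] by (auto intro!: derivative_eq_intros Nt(1,2))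
    ultimately show "\<exists>D<0. (w' has_real_derivative D) (at t)" by (intro exI[of _ "gf t - \<tau> * gu t"]) simp
  qed
qed

section \<open>The H\<ouml>lder norm\<close>

lemma abs_le_holder_norm:
  assumes "bounded (range f)" and "bdd_above (holder_quotients f)"
  shows "\<bar>f x\<bar> \<le> holder_norm f"
proof -
  obtain a where "\<And>x. \<bar>f x\<bar> \<le> a" using assms(1) unfolding bounded_iff by auto
  then have "bdd_above (range (\<lambda>x. \<bar>f x\<bar>))" by (intro bdd_aboveI2)
  then have "\<bar>f x\<bar> \<le> sup_norm f" unfolding sup_norm_def by (simp add: cSup_upper)
  moreover have "\<bar>f 0 - f 1\<bar> / \<bar>0 - 1\<bar> powr (1/2) \<in> holder_quotients f"
    unfolding holder_quotients_def by force
  then have "\<bar>f 0 - f 1\<bar> \<le> Sup (holder_quotients f)" using cSup_upper[OF _ assms(2)] by simp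
  then have "0 \<le> Sup (holder_quotients f)" by linarith
  ultimately show ?thesis unfolding holder_norm_def by simp
qed

lemma bdd_above_holder_quotients_diff:
  assumes "bdd_above (holder_quotients f)" and "bdd_above (holder_quotients g)"
  shows "bdd_above (holder_quotients (\<lambda>x. f x - g x))"
proof -
  obtain Sf Sg where Sf: "\<And>z. z \<in> holder_quotients f \<Longrightarrow> z \<le> Sf"
    and Sg: "\<And>z. z \<in> holder_quotients g \<Longrightarrow> z \<le> Sg"
    using assms unfolding bdd_above_def by blast
  show ?thesis
  proof (rule bdd_aboveI[of _ "Sf + Sg"])
    fix z assume "z \<in> holder_quotients (\<lambda>x. f x - g x)"
    then obtain x y where "x \<noteq> y" and z: "z = \<bar>(f x - g x) - (f y - g y)\<bar> / \<bar>x - y\<bar> powr (1/2)"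
      unfolding holder_quotients_def by blast
    define p where "p = \<bar>x - y\<bar> powr (1/2)"
    have "p > 0" unfolding p_def using \<open>x \<noteq> y\<close> by simp
    have "\<bar>f x - f y\<bar> / p \<le> Sf" "\<bar>g x - g y\<bar> / p \<le> Sg"
      using Sf Sg \<open>x \<noteq> y\<close> unfolding holder_quotients_def p_def by blast+
    moreover have "z \<le> \<bar>f x - f y\<bar> / p + \<bar>g x - g y\<bar> / p"
      unfolding z p_def[symmetric] using \<open>p > 0\<close>
      by (simp add: add_divide_distrib[symmetric] divide_right_mono)
    ultimately show "z \<le> Sf + Sg" by simp
  qed
qed

lemma bdd_above_holder_quotients_lipschitz:
  assumes lip: "\<forall>x y. \<bar>f x - f y\<bar> \<le> C * \<bar>x - y\<bar>" and bound: "\<And>x. \<bar>f x\<bar> \<le> B"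
  shows "bdd_above (holder_quotients f)"
proof (rule bdd_aboveI[of _ "C + 2 * B"])
  fix z assume "z \<in> holder_quotients f"
  then obtain x y where "x \<noteq> y" and z: "z = \<bar>f x - f y\<bar> / sqrt \<bar>x - y\<bar>"
    unfolding holder_quotients_def by (auto simp: powr_half_sqrt)
  define h where "h = \<bar>x - y\<bar>"
  have "h > 0" "sqrt h > 0" unfolding h_def using \<open>x \<noteq> y\<close> by auto
  have "C \<ge> 0" using lip[rule_format, of 0 1] by simp
  have "B \<ge> 0" using bound[of 0] by simp
  show "z \<le> C + 2 * B"
  proof (cases "h \<le> 1")
    case True
    have "\<bar>f x - f y\<bar> \<le> C * h" using lip unfolding h_def by blast
    also have "\<dots> = C * sqrt h * sqrt h" using \<open>h > 0\<close> by (simp add: mult.assoc)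
    finally have "\<bar>f x - f y\<bar> \<le> C * sqrt h * sqrt h" .
    then have "z \<le> C * sqrt h" unfolding z h_def[symmetric] using \<open>sqrt h > 0\<close> by (simp add: divide_le_eq)
    also have "\<dots> \<le> C" using True \<open>C \<ge> 0\<close> \<open>h > 0\<close> by (simp add: mult_left_le)
    finally show ?thesis using \<open>B \<ge> 0\<close> by simp
  next
    case False
    have "\<bar>f x - f y\<bar> \<le> 2 * B" using bound[of x] bound[of y] by linarith
    moreover have "z \<le> \<bar>f x - f y\<bar>"
      unfolding z h_def[symmetric] using False by (simp add: divide_le_eq mult_le_cancel_left1)
    ultimately show ?thesis using \<open>C \<ge> 0\<close> by simp
  qed
qed

lemma in_X_tendsto_uniform:
  assumes X: "\<forall>\<^sub>F k in F. in_X L (u k)"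
    and lip: "\<forall>x y. \<bar>g x - g y\<bar> \<le> C * \<bar>x - y\<bar>" and bound: "\<And>x. \<bar>g x\<bar> \<le> B"
    and lim: "((\<lambda>k. holder_norm (\<lambda>x. u k x - g x)) \<longlongrightarrow> 0) F" and "\<theta> > 0"
  shows "\<forall>\<^sub>F k in F. \<forall>x. \<bar>u k x - g x\<bar> < \<theta>"
  using X order_tendstoD(2)[OF lim \<open>\<theta> > 0\<close>]
proof eventually_elim
  case (elim k)
  have "bounded (range (\<lambda>x. u k x - g x))"
  proof -
    obtain a where a: "\<And>x. \<bar>u k x\<bar> \<le> a" using elim(1) unfolding in_X_def bounded_iff by auto
    have "norm (u k x - g x) \<le> a + B" for x
      using a[of x] bound[of x] abs_triangle_ineq4[of "u k x" "g x"] by simp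
    then show ?thesis unfolding bounded_iff by blast
  qed
  moreover have "bdd_above (holder_quotients (\<lambda>x. u k x - g x))"
    by (rule bdd_above_holder_quotients_diff[OF _ bdd_above_holder_quotients_lipschitz[OF lip bound]])
      (use elim(1) in \<open>simp add: in_X_def\<close>)
  ultimately show ?case using abs_le_holder_norm elim(2) order.strict_trans1 by blast
qed

section \<open>The linearized competition system\<close>

lemma pospart_contraction: "\<bar>pospart a - pospart b\<bar> \<le> \<bar>a - b\<bar>"
  and abs_pospart_le: "\<bar>pospart a\<bar> \<le> \<bar>a\<bar>"
  unfolding pospart_def by auto

lemma negpart_contraction: "\<bar>negpart a - negpart b\<bar> \<le> \<bar>a - b\<bar>"
  and abs_negpart_le: "\<bar>negpart a\<bar> \<le> \<bar>a\<bar>"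
  unfolding negpart_def by auto

lemma lipschitz_bounded_comp_contraction:
  fixes v h :: "real \<Rightarrow> real"
  assumes lip: "\<forall>x y. \<bar>v x - v y\<bar> \<le> C * \<bar>x - y\<bar>" and bound: "\<And>x. \<bar>v x\<bar> \<le> B" and "c > 0"
    and contr: "\<And>a b. \<bar>h a - h b\<bar> \<le> \<bar>a - b\<bar>" and small: "\<And>a. \<bar>h a\<bar> \<le> \<bar>a\<bar>"
  shows "\<forall>x y. \<bar>h (v x) / c - h (v y) / c\<bar> \<le> C / c * \<bar>x - y\<bar>" and "\<And>x. \<bar>h (v x) / c\<bar> \<le> B / c"
proof -
  show "\<forall>x y. \<bar>h (v x) / c - h (v y) / c\<bar> \<le> C / c * \<bar>x - y\<bar>"
  proof (intro allI)
    fix x y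
    have "\<bar>h (v x) - h (v y)\<bar> \<le> C * \<bar>x - y\<bar>" using contr[of "v x" "v y"] lip[rule_format, of x y] by linarith
    then show "\<bar>h (v x) / c - h (v y) / c\<bar> \<le> C / c * \<bar>x - y\<bar>"
      using \<open>c > 0\<close> by (simp add: diff_divide_distrib[symmetric] divide_right_mono)
  qed
  show "\<bar>h (v x) / c\<bar> \<le> B / c" for x
    using small[of "v x"] bound[of x] \<open>c > 0\<close> by (simp add: divide_right_mono)
qed

lemma lipschitz_dist_lt:
  fixes v :: "real \<Rightarrow> real"
  assumes lip: "\<forall>x y. \<bar>v x - v y\<bar> \<le> Lv * \<bar>x - y\<bar>" and "Lv * r < e / 2"
    and "\<bar>t - x0\<bar> < r"
  shows "\<bar>v t - v x0\<bar> < e / 2"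
proof -
  have "Lv \<ge> 0" using lip[rule_format, of 0 1] by simp
  then have "\<bar>v t - v x0\<bar> \<le> Lv * r" using lip[rule_format, of t x0] \<open>\<bar>t - x0\<bar> < r\<close>
    by (meson less_imp_le mult_left_mono order_trans)
  then show ?thesis using \<open>Lv * r < e / 2\<close> by simp
qed

lemma sup_over_le: "(\<And>x. x \<in> S \<Longrightarrow> f x \<le> s) \<Longrightarrow> 0 \<le> s \<Longrightarrow> sup_over S f \<le> s"
  unfolding sup_over_def by (auto intro: cSup_least)

lemma normalized_pair_le:
  fixes \<phi> \<psi> :: "real \<Rightarrow> real"
  assumes "L > 0" and "L_periodic L \<phi>" and "L_periodic L \<psi>"
    and "continuous_on UNIV \<phi>" and "continuous_on UNIV \<psi>"
    and "\<And>x. \<phi> x > 0" and "\<And>x. \<psi> x > 0" and "\<alpha> > 0" and "d > 0"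
    and norm: "Sup ((\<lambda>x. \<alpha> * \<phi> x + d * \<psi> x) ` {0..L}) = 1"
  shows "\<phi> x \<le> 1 / \<alpha>" and "\<psi> x \<le> 1 / d"
proof -
  define h where "h x = \<alpha> * \<phi> x + d * \<psi> x" for x
  have "continuous_on {0..L} \<phi>" "continuous_on {0..L} \<psi>"
    using assms(4,5) continuous_on_subset by blast+
  then have "continuous_on {0..L} h" unfolding h_def[abs_def] by (intro continuous_intros)
  then have "bdd_above (h ` {0..L})"
    by (intro bounded_imp_bdd_above compact_imp_bounded compact_continuous_image) auto
  moreover have "L_periodic L h" using assms(2,3) unfolding L_periodic_def h_def by simp
  then have "h x \<in> h ` {0..L}" using L_periodic_range[OF \<open>L > 0\<close>] by blast
  ultimately have "h x \<le> 1" using norm cSup_upper[of "h x" "h ` {0..L}"] unfolding h_def[symmetric] by simp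
  moreover have "\<alpha> * \<phi> x > 0" "d * \<psi> x > 0" using assms(6-9) by simp_all
  ultimately have "\<alpha> * \<phi> x \<le> 1" "d * \<psi> x \<le> 1" unfolding h_def by linarith+
  then show "\<phi> x \<le> 1 / \<alpha>" "\<psi> x \<le> 1 / d"
    using \<open>\<alpha> > 0\<close> \<open>d > 0\<close> by (simp_all add: le_divide_eq mult.commute)
qed

lemma eventually_less_affine_at_top:
  fixes a b e :: real
  assumes "b > 0"
  shows "\<forall>\<^sub>F k in at_top. a < b * k - e"
proof (rule eventually_at_top_linorder[THEN iffD2], intro exI allI impI)
  fix k assume "(a + e) / b + 1 \<le> k"
  then have "a + e < b * k" using \<open>b > 0\<close> by (simp add: field_simps)
  then show "a < b * k - e" by simp
qed

lemma eventually_at_top_beyond: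
  fixes k0 :: real
  assumes "\<forall>\<^sub>F k in at_top. P k"
  shows "\<exists>kb>k0. \<forall>k\<ge>kb. P k"
proof -
  obtain N where "\<And>k. N \<le> k \<Longrightarrow> P k" using assms unfolding eventually_at_top_linorder by blast
  then show ?thesis by (intro exI[of _ "max N (k0 + 1)"]) auto
qed

lemma periodic_coefficient_bounds:
  fixes \<mu>1 \<mu>2 \<omega> :: "real \<Rightarrow> real"
  assumes "L > 0" and "bounded (range \<mu>1)" and "bounded (range \<mu>2)"
    and "smooth_fun \<omega>" and "\<And>x. \<omega> x > 0" and "L_periodic L \<omega>"
  obtains Bm \<omega>0 \<omega>1 where "\<And>x. \<bar>\<mu>1 x\<bar> \<le> Bm" and "\<And>x. \<bar>\<mu>2 x\<bar> \<le> Bm"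
    and "\<And>x. \<omega>0 \<le> \<omega> x \<and> \<omega> x \<le> \<omega>1" and "0 < \<omega>0"
proof -
  obtain B1 B2 where B1: "\<And>x. \<bar>\<mu>1 x\<bar> \<le> B1" and B2: "\<And>x. \<bar>\<mu>2 x\<bar> \<le> B2"
    using assms(2,3) unfolding bounded_iff by auto
  have "continuous_on UNIV \<omega>"
    using \<open>smooth_fun \<omega>\<close> unfolding smooth_fun_def
    by (metis funpow_0 differentiable_imp_continuous_within continuous_at_imp_continuous_on)
  then obtain xm xM where "\<And>x. \<omega> xm \<le> \<omega> x" and "\<And>x. \<omega> x \<le> \<omega> xM"
    using L_periodic_attains_inf[OF \<open>L > 0\<close> \<open>L_periodic L \<omega>\<close>]
      L_periodic_attains_sup[OF \<open>L > 0\<close> \<open>L_periodic L \<omega>\<close>] by metis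
  moreover have "\<bar>\<mu>1 x\<bar> \<le> max B1 B2" "\<bar>\<mu>2 x\<bar> \<le> max B1 B2" for x
    using B1[of x] B2[of x] by linarith+
  ultimately show ?thesis using that \<open>\<And>x. \<omega> x > 0\<close> by blast
qed

lemma absorption_thresholds:
  fixes \<epsilon>' s \<alpha> d \<omega>0 \<omega>1 Lv :: real
  assumes "0 < \<epsilon>'" and "0 < s" and "0 < \<alpha>" and "0 < d" and "0 < \<omega>0" and "\<omega>0 \<le> \<omega>1" and "0 \<le> Lv"
  obtains c r \<theta> where "0 < c" and "0 < r" and "0 < \<theta>"
    and "c + \<theta> \<le> \<epsilon>' / (2 * \<alpha>)" and "c + \<theta> \<le> \<epsilon>' / (2 * d)" and "Lv * r < \<epsilon>' / 2"
    and "\<omega>1 * \<theta> * (1 / d) \<le> \<omega>0 * c * s / 2" and "\<omega>1 * \<theta> * (1 / \<alpha>) \<le> \<omega>0 * c * s / 2"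
proof -
  define c where "c = min (\<epsilon>' / (4 * \<alpha>)) (\<epsilon>' / (4 * d))"
  define r where "r = \<epsilon>' / (2 * (Lv + 1))"
  define \<theta> where "\<theta> = min c (min (\<omega>0 * c * s * d / (2 * \<omega>1)) (\<omega>0 * c * s * \<alpha> / (2 * \<omega>1)))"
  have "0 < c" "0 < r" unfolding c_def r_def using assms by simp_all
  moreover have "0 < \<theta>" unfolding \<theta>_def using assms \<open>0 < c\<close> by simp
  moreover have "c + \<theta> \<le> \<epsilon>' / (2 * \<alpha>)" "c + \<theta> \<le> \<epsilon>' / (2 * d)"
    unfolding \<theta>_def c_def by (auto simp: field_simps)
  moreover have "Lv * r < \<epsilon>' / 2" unfolding r_def using assms by (simp add: field_simps)
  moreover have "\<theta> * (2 * \<omega>1) \<le> \<omega>0 * c * s * d" "\<theta> * (2 * \<omega>1) \<le> \<omega>0 * c * s * \<alpha>"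
  proof -
    have "\<theta> \<le> \<omega>0 * c * s * d / (2 * \<omega>1)" "\<theta> \<le> \<omega>0 * c * s * \<alpha> / (2 * \<omega>1)"
      unfolding \<theta>_def by simp_all
    moreover have "0 < 2 * \<omega>1" using assms by linarith
    ultimately show "\<theta> * (2 * \<omega>1) \<le> \<omega>0 * c * s * d" "\<theta> * (2 * \<omega>1) \<le> \<omega>0 * c * s * \<alpha>"
      by (simp_all add: le_divide_eq)
  qed
  then have "\<omega>1 * \<theta> * (1 / d) \<le> \<omega>0 * c * s / 2" "\<omega>1 * \<theta> * (1 / \<alpha>) \<le> \<omega>0 * c * s / 2"
    using assms by (simp_all add: field_simps)
  ultimately show ?thesis using that by blast
qed

lemma principal_eigenvalue_le:
  fixes u1 u2 \<phi> \<psi> wu w \<mu> \<omega> :: "real \<Rightarrow> real"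
  assumes "L > 0" and "L_periodic L u1" and "L_periodic L \<phi>"
    and u1: "\<And>x. 0 < u1 x \<and> u1 x \<le> U" and u2: "\<And>x. 0 < u2 x \<and> u2 x \<le> U"
    and \<phi>_pos: "\<And>x. 0 < \<phi> x" and \<psi>_pos: "\<And>x. 0 < \<psi> x"
    and \<mu>: "\<And>x. \<bar>\<mu> x\<bar> \<le> Bm" and \<omega>: "\<And>x. 0 < \<omega> x \<and> \<omega> x \<le> \<omega>1" and "k > 0"
    and "C11_second u1 wu"
    and u1_eq: "AE x in lebesgue. - wu x = \<mu> x * (1 - u1 x) * u1 x - k * \<omega> x * u1 x * u2 x"
    and "C11_second \<phi> w"
    and eig: "AE x in lebesgue. - (w x + (\<mu> x * (1 - 2 * u1 x) - k * \<omega> x * u2 x) * \<phi> x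
                                  + k * \<omega> x * u1 x * \<psi> x) = lam * \<phi> x"
  shows "lam \<le> Bm * U"
proof (rule ccontr)
  assume "\<not> lam \<le> Bm * U"
  define P where "P x = k * \<omega> x * u2 x - \<mu> x * (1 - u1 x)" for x
  have P_bound: "\<bar>P x\<bar> \<le> k * \<omega>1 * U + Bm * (1 + U)" for x
  proof -
    have "\<omega> x * u2 x \<le> \<omega>1 * U" using \<omega>[of x] u2[of x] by (intro mult_mono) auto
    then have "\<bar>k * \<omega> x * u2 x\<bar> \<le> k * \<omega>1 * U"
      using \<open>k > 0\<close> \<omega>[of x] u2[of x] by (simp add: abs_mult mult.assoc)
    moreover have "\<bar>\<mu> x * (1 - u1 x)\<bar> \<le> Bm * (1 + U)"
      unfolding abs_mult using \<mu>[of x] u1[of x] by (intro mult_mono) auto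
    ultimately show ?thesis unfolding P_def by linarith
  qed
  show False
  proof (rule positive_periodic_solution_excludes_strict_supersolution
      [OF \<open>L > 0\<close> \<open>L_periodic L \<phi>\<close> \<open>L_periodic L u1\<close> \<phi>_pos _ \<open>C11_second \<phi> w\<close> \<open>C11_second u1 wu\<close> P_bound])
    show "0 < u1 x" for x using u1 by simp
    show "0 < lam - Bm * U" using \<open>\<not> lam \<le> Bm * U\<close> by simp
    show "AE t in lebesgue. wu t = P t * u1 t"
      using u1_eq by eventually_elim (simp add: P_def algebra_simps)
    show "AE t in lebesgue. w t \<le> (P t - (lam - Bm * U)) * \<phi> t"
      using eig
    proof eventually_elim
      case (elim t)
      have "\<mu> t * u1 t * \<phi> t \<le> Bm * U * \<phi> t"
        using \<mu>[of t] u1[of t] \<phi>_pos[of t] abs_le_D1 by (intro mult_right_mono mult_mono) auto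
      moreover have "0 \<le> k * \<omega> t * u1 t * \<psi> t" using \<open>k > 0\<close> \<omega>[of t] u1[of t] \<psi>_pos[of t] by simp
      ultimately have "0 \<le> Bm * U * \<phi> t - \<mu> t * u1 t * \<phi> t + k * \<omega> t * u1 t * \<psi> t" by linarith
      also have "\<dots> = (P t - (lam - Bm * U)) * \<phi> t - w t"
        using elim unfolding P_def by algebra
      finally show ?case by simp
    qed
  qed
qed

lemma absorbed_component_le:
  fixes f w a b g m om :: "real \<Rightarrow> real"
  assumes "C11_second f w" and f_le: "\<And>t. f t \<le> M" and "0 \<le> M"
    and eq: "AE t in lebesgue. w t = (K * om t * b t - m t * (1 - 2 * a t) - lam) * f t - K * om t * a t * g t"
    and near: "\<And>t. \<bar>t - x0\<bar> < r \<Longrightarrow> 0 < a t \<and> a t \<le> \<theta> \<and> c \<le> b t"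
    and m: "\<And>t. \<bar>m t\<bar> \<le> Bm" and om: "\<And>t. \<omega>0 \<le> om t \<and> om t \<le> \<omega>1" and g: "\<And>t. 0 \<le> g t \<and> g t \<le> Q"
    and "lam \<le> \<Lambda>" and "K > 0" and "\<omega>0 > 0" and "c > 0" and "r > 0" and "s > 0"
    and small: "\<omega>1 * \<theta> * Q \<le> \<omega>0 * c * s / 2"
    and large: "2 * M / r\<^sup>2 < K * \<omega>0 * c * s / 2 - (Bm * (1 + 2 * \<theta>) + \<Lambda>) * s"
  shows "f x0 \<le> s"
proof (rule C11_le_if_second_deriv_large[OF \<open>C11_second f w\<close> \<open>r > 0\<close> \<open>s > 0\<close> \<open>0 \<le> M\<close> f_le f_le])
  define A where "A = Bm * (1 + 2 * \<theta>) + \<Lambda>"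
  define \<kappa> where "\<kappa> = K * \<omega>0 * c"
  have "0 \<le> 2 * M / r\<^sup>2" using \<open>0 \<le> M\<close> by simp
  then have "A * s < \<kappa> * s / 2" using large unfolding A_def \<kappa>_def by simp
  then have "A < \<kappa> / 2" using \<open>s > 0\<close> by (simp add: field_simps)
  moreover have "\<kappa> > 0" unfolding \<kappa>_def using \<open>K > 0\<close> \<open>\<omega>0 > 0\<close> \<open>c > 0\<close> by simp
  ultimately have "\<kappa> - A > 0" by simp
  show "AE t in lebesgue. \<bar>t - x0\<bar> < r \<longrightarrow> s < f t \<longrightarrow> 2 * M / r\<^sup>2 < w t"
    using eq
  proof eventually_elim
    case (elim t)
    show ?case
    proof (intro impI)
      assume "\<bar>t - x0\<bar> < r" and "s < f t"
      then have a: "0 < a t" "a t \<le> \<theta>" and "c \<le> b t" and "0 < f t" using near \<open>s > 0\<close> by auto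
      have "\<kappa> * f t \<le> K * om t * b t * f t"
        unfolding \<kappa>_def using om[of t] \<open>c \<le> b t\<close> \<open>K > 0\<close> \<open>\<omega>0 > 0\<close> \<open>c > 0\<close> \<open>0 < f t\<close>
        by (intro mult_right_mono mult_left_mono mult_mono) auto
      moreover have "m t * (1 - 2 * a t) * f t \<le> Bm * (1 + 2 * \<theta>) * f t"
      proof -
        have "m t * (1 - 2 * a t) \<le> \<bar>m t\<bar> * \<bar>1 - 2 * a t\<bar>" by (simp add: abs_mult[symmetric])
        also have "\<dots> \<le> Bm * (1 + 2 * \<theta>)" using m[of t] a by (intro mult_mono) auto
        finally show ?thesis using \<open>0 < f t\<close> by (simp add: mult_right_mono)
      qed
      moreover have "lam * f t \<le> \<Lambda> * f t" using \<open>lam \<le> \<Lambda>\<close> \<open>0 < f t\<close> by (simp add: mult_right_mono)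
      moreover have "K * om t * a t * g t \<le> K * (\<omega>1 * \<theta> * Q)"
      proof -
        have "om t * a t \<le> \<omega>1 * \<theta>" using om[of t] a \<open>\<omega>0 > 0\<close> by (intro mult_mono) auto
        then have "om t * a t * g t \<le> \<omega>1 * \<theta> * Q"
          using g[of t] om[of t] a \<open>\<omega>0 > 0\<close> by (intro mult_mono) auto
        then show ?thesis using \<open>K > 0\<close> by (simp add: mult.assoc)
      qed
      moreover have "K * (\<omega>1 * \<theta> * Q) \<le> \<kappa> * s / 2"
        unfolding \<kappa>_def using mult_left_mono[OF small, of K] \<open>K > 0\<close> by (simp add: mult.assoc)
      moreover have "(\<kappa> - A) * s \<le> (\<kappa> - A) * f t"
        using \<open>\<kappa> - A > 0\<close> \<open>s < f t\<close> by simp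
      moreover have "w t = K * om t * b t * f t - m t * (1 - 2 * a t) * f t - lam * f t - K * om t * a t * g t"
        using elim by (simp add: algebra_simps)
      ultimately have "(\<kappa> - A) * s - \<kappa> * s / 2 \<le> w t"
        unfolding A_def by (simp add: algebra_simps)
      moreover have "2 * M / r\<^sup>2 < (\<kappa> - A) * s - \<kappa> * s / 2"
        using large unfolding A_def \<kappa>_def by (simp add: algebra_simps)
      ultimately show "2 * M / r\<^sup>2 < w t" by linarith
    qed
  qed
qed

lemma eigenfunctions_small_on_sign_sets:
  fixes \<mu>1 \<mu>2 \<omega> v u1 u2 \<phi> \<psi> wu w1 w2 :: "real \<Rightarrow> real"
  assumes "L > 0" and "\<alpha> > 0" and "d > 0" and "k > 0"
    and \<mu>1: "\<And>x. \<bar>\<mu>1 x\<bar> \<le> Bm" and \<mu>2: "\<And>x. \<bar>\<mu>2 x\<bar> \<le> Bm"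
    and \<omega>: "\<And>x. \<omega>0 \<le> \<omega> x \<and> \<omega> x \<le> \<omega>1" and "\<omega>0 > 0"
    and v_lip: "\<forall>x y. \<bar>v x - v y\<bar> \<le> Lv * \<bar>x - y\<bar>"
    and "L_periodic L u1" and u1: "\<And>x. 0 < u1 x \<and> u1 x \<le> U" and u2: "\<And>x. 0 < u2 x \<and> u2 x \<le> U"
    and u1_close: "\<And>x. \<bar>u1 x - pospart (v x) / \<alpha>\<bar> < \<theta>"
    and u2_close: "\<And>x. \<bar>u2 x - negpart (v x) / d\<bar> < \<theta>"
    and "C11_second u1 wu"
    and u1_eq: "AE x in lebesgue. - wu x = \<mu>1 x * (1 - u1 x) * u1 x - k * \<omega> x * u1 x * u2 x"
    and "L_periodic L \<phi>" and "L_periodic L \<psi>" and \<phi>_pos: "\<And>x. 0 < \<phi> x" and \<psi>_pos: "\<And>x. 0 < \<psi> x"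
    and "C11_second \<phi> w1" and "C11_second \<psi> w2"
    and \<phi>_eq: "AE x in lebesgue. - (w1 x + (\<mu>1 x * (1 - 2 * u1 x) - k * \<omega> x * u2 x) * \<phi> x
                                 + k * \<omega> x * u1 x * \<psi> x) = lam * \<phi> x"
    and \<psi>_eq: "AE x in lebesgue. - (\<alpha> * k * \<omega> x * u2 x * \<phi> x + d * w2 x
                                 + (\<mu>2 x * (1 - 2 * u2 x) - \<alpha> * k * \<omega> x * u1 x) * \<psi> x)
                              = lam * \<psi> x"
    and norm: "Sup ((\<lambda>x. \<alpha> * \<phi> x + d * \<psi> x) ` {0..L}) = 1"
    and "\<epsilon>' > 0" and "s > 0" and "c > 0" and "r > 0"
    and c_le: "c + \<theta> \<le> \<epsilon>' / (2 * \<alpha>)" "c + \<theta> \<le> \<epsilon>' / (2 * d)"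
    and r_small: "Lv * r < \<epsilon>' / 2"
    and small: "\<omega>1 * \<theta> * (1 / d) \<le> \<omega>0 * c * s / 2" "\<omega>1 * \<theta> * (1 / \<alpha>) \<le> \<omega>0 * c * s / 2"
    and large: "2 * (1 / \<alpha>) / r\<^sup>2 < k * \<omega>0 * c * s / 2 - (Bm * (1 + 2 * \<theta>) + Bm * U) * s"
      "2 * (1 / d) / r\<^sup>2 < \<alpha> * k / d * \<omega>0 * c * s / 2 - (Bm / d * (1 + 2 * \<theta>) + Bm * U / d) * s"
  shows "sup_over {x. negpart (v x) > \<epsilon>'} \<phi> + sup_over {x. pospart (v x) > \<epsilon>'} \<psi> \<le> 2 * s"
proof -
  have \<omega>_pos: "0 < \<omega> x \<and> \<omega> x \<le> \<omega>1" for x using \<omega>[of x] \<open>\<omega>0 > 0\<close> by simp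
  have lam: "lam \<le> Bm * U"
    by (rule principal_eigenvalue_le[OF \<open>L > 0\<close> \<open>L_periodic L u1\<close> \<open>L_periodic L \<phi>\<close> u1 u2 \<phi>_pos \<psi>_pos
          \<mu>1 \<omega>_pos \<open>k > 0\<close> \<open>C11_second u1 wu\<close> u1_eq \<open>C11_second \<phi> w1\<close> \<phi>_eq])
  have \<phi>_le: "\<phi> x \<le> 1 / \<alpha>" and \<psi>_le: "\<psi> x \<le> 1 / d" for x
    using normalized_pair_le[OF \<open>L > 0\<close> \<open>L_periodic L \<phi>\<close> \<open>L_periodic L \<psi>\<close>
        C11_second_continuous_on[OF \<open>C11_second \<phi> w1\<close>] C11_second_continuous_on[OF \<open>C11_second \<psi> w2\<close>]
        \<phi>_pos \<psi>_pos \<open>\<alpha> > 0\<close> \<open>d > 0\<close> norm] by auto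
  have \<phi>_small: "\<phi> x0 \<le> s" if "v x0 < - \<epsilon>'" for x0
  proof (rule absorbed_component_le[OF \<open>C11_second \<phi> w1\<close> \<phi>_le _ _ _ \<mu>1 \<omega> _ lam \<open>k > 0\<close> \<open>\<omega>0 > 0\<close>
        \<open>c > 0\<close> \<open>r > 0\<close> \<open>s > 0\<close> small(1) large(1)])
    show "0 \<le> 1 / \<alpha>" using \<open>\<alpha> > 0\<close> by simp
    show "0 \<le> \<psi> t \<and> \<psi> t \<le> 1 / d" for t using \<psi>_pos[of t] \<psi>_le[of t] by simp
    show "AE t in lebesgue. w1 t = (k * \<omega> t * u2 t - \<mu>1 t * (1 - 2 * u1 t) - lam) * \<phi> t
                                   - k * \<omega> t * u1 t * \<psi> t"
      using \<phi>_eq by eventually_elim (simp add: algebra_simps)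
    fix t assume "\<bar>t - x0\<bar> < r"
    then have "\<bar>v t - v x0\<bar> < \<epsilon>' / 2" by (rule lipschitz_dist_lt[OF v_lip r_small])
    then have "v t < - (\<epsilon>' / 2)" using \<open>v x0 < - \<epsilon>'\<close> unfolding abs_less_iff by linarith
    then have "pospart (v t) = 0" "negpart (v t) / d > 2 * \<epsilon>' / (4 * d)"
      using \<open>d > 0\<close> \<open>\<epsilon>' > 0\<close> unfolding pospart_def negpart_def by (auto simp: field_simps)
    then show "0 < u1 t \<and> u1 t \<le> \<theta> \<and> c \<le> u2 t"
      using u1[of t] u1_close[of t] u2_close[of t] c_le(2) by (auto simp: field_simps)
  qed
  \<comment> \<open>Divided by \<open>d\<close>, the equation for \<open>\<psi>\<close> is that for \<open>\<phi>\<close> with the two species exchanged.\<close>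
  have \<psi>_small: "\<psi> x0 \<le> s" if "v x0 > \<epsilon>'" for x0
  proof (rule absorbed_component_le[where m = "\<lambda>t. \<mu>2 t / d", OF \<open>C11_second \<psi> w2\<close> \<psi>_le _ _ _ _ \<omega> _ _ _ \<open>\<omega>0 > 0\<close>
        \<open>c > 0\<close> \<open>r > 0\<close> \<open>s > 0\<close> small(2) large(2)])
    show "0 \<le> 1 / d" using \<open>d > 0\<close> by simp
    show "0 \<le> \<phi> t \<and> \<phi> t \<le> 1 / \<alpha>" for t using \<phi>_pos[of t] \<phi>_le[of t] by simp
    show "\<bar>\<mu>2 t / d\<bar> \<le> Bm / d" for t using \<mu>2[of t] \<open>d > 0\<close> by (simp add: divide_right_mono)
    show "lam / d \<le> Bm * U / d" using lam \<open>d > 0\<close> by (simp add: divide_right_mono)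
    show "0 < \<alpha> * k / d" using \<open>\<alpha> > 0\<close> \<open>k > 0\<close> \<open>d > 0\<close> by simp
    show "AE t in lebesgue. w2 t = (\<alpha> * k / d * \<omega> t * u1 t - \<mu>2 t / d * (1 - 2 * u2 t) - lam / d) * \<psi> t
                                   - \<alpha> * k / d * \<omega> t * u2 t * \<phi> t"
      using \<psi>_eq
    proof eventually_elim
      case (elim t)
      then have eq: "d * w2 t = (\<alpha> * k * \<omega> t * u1 t - \<mu>2 t * (1 - 2 * u2 t) - lam) * \<psi> t
                                - \<alpha> * k * \<omega> t * u2 t * \<phi> t"
        by algebra
      have "w2 t = (d * w2 t) / d" using \<open>d > 0\<close> by simp
      also have "\<dots> = (\<alpha> * k / d * \<omega> t * u1 t - \<mu>2 t / d * (1 - 2 * u2 t) - lam / d) * \<psi> t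
                      - \<alpha> * k / d * \<omega> t * u2 t * \<phi> t"
        unfolding eq using \<open>d > 0\<close> by (simp add: field_simps)
      finally show ?case .
    qed
    fix t assume "\<bar>t - x0\<bar> < r"
    then have "\<bar>v t - v x0\<bar> < \<epsilon>' / 2" by (rule lipschitz_dist_lt[OF v_lip r_small])
    then have "v t > \<epsilon>' / 2" using \<open>v x0 > \<epsilon>'\<close> unfolding abs_less_iff by linarith
    then have "negpart (v t) = 0" "pospart (v t) / \<alpha> > 2 * \<epsilon>' / (4 * \<alpha>)"
      using \<open>\<alpha> > 0\<close> \<open>\<epsilon>' > 0\<close> unfolding pospart_def negpart_def by (auto simp: field_simps)
    then show "0 < u2 t \<and> u2 t \<le> \<theta> \<and> c \<le> u1 t"
      using u2[of t] u1_close[of t] u2_close[of t] c_le(1) by (auto simp: field_simps)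
  qed
  have "sup_over {x. negpart (v x) > \<epsilon>'} \<phi> \<le> s"
    using \<phi>_small \<open>s > 0\<close> \<open>\<epsilon>' > 0\<close> unfolding negpart_def by (intro sup_over_le) (auto simp: min_def split: if_splits)
  moreover have "sup_over {x. pospart (v x) > \<epsilon>'} \<psi> \<le> s"
    using \<psi>_small \<open>s > 0\<close> \<open>\<epsilon>' > 0\<close> unfolding pospart_def by (intro sup_over_le) (auto simp: max_def split: if_splits)
  ultimately show ?thesis by simp
qed

theorem lemma3p9:
  fixes L \<alpha> d \<eta> \<epsilon> k0 :: real
    and \<mu>1 \<mu>2 \<omega> v :: "real \<Rightarrow> real"
    and u1 u2 \<phi> \<psi> :: "real \<Rightarrow> real \<Rightarrow> real"
    and lam :: "real \<Rightarrow> real"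
  assumes L: "L > 0" and \<alpha>: "\<alpha> > 0" and d: "d > 0"
    and \<eta>: "\<eta> > 0" and \<epsilon>: "\<epsilon> > 0"
    and \<mu>1: "\<mu>1 \<in> borel_measurable lebesgue" "bounded (range \<mu>1)" "\<forall>x. \<mu>1 x > 0" "L_periodic L \<mu>1"
    and \<mu>2: "\<mu>2 \<in> borel_measurable lebesgue" "bounded (range \<mu>2)" "\<forall>x. \<mu>2 x > 0" "L_periodic L \<mu>2"
    and \<omega>: "smooth_fun \<omega>" "\<forall>x. \<omega> x > 0" "L_periodic L \<omega>"
    and v_per: "L_periodic L v"
    and v_sign: "\<exists>x. v x > 0" "\<exists>x. v x < 0"
    and v_eq: "\<exists>w. C11_second v w \<and> (AE x in lebesgue.
        - w x = \<mu>1 x / \<alpha> * (\<alpha> - v x) * pospart (v x)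
                - \<mu>2 x / d\<^sup>2 * (d + v x) * negpart (v x))"
    and k0: "k0 > 0"
    and u_O: "\<forall>k>k0. O_eps L \<alpha> d v \<eta> \<epsilon> (u1 k) (u2 k)"
    and u_eq: "\<forall>k>k0. \<exists>w1 w2. C11_second (u1 k) w1 \<and> C11_second (u2 k) w2
        \<and> (AE x in lebesgue. - w1 x = \<mu>1 x * (1 - u1 k x) * u1 k x - k * \<omega> x * u1 k x * u2 k x)
        \<and> (AE x in lebesgue. - d * w2 x = \<mu>2 x * (1 - u2 k x) * u2 k x - \<alpha> * k * \<omega> x * u1 k x * u2 k x)"
    and u_lim: "((\<lambda>k. holder_norm (\<lambda>x. u1 k x - pospart (v x) / \<alpha>)) \<longlongrightarrow> 0) at_top"
               "((\<lambda>k. holder_norm (\<lambda>x. u2 k x - negpart (v x) / d)) \<longlongrightarrow> 0) at_top"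
    and eig: "\<forall>k>k0. L_periodic L (\<phi> k) \<and> L_periodic L (\<psi> k)
        \<and> (\<forall>x. \<phi> k x > 0) \<and> (\<forall>x. \<psi> k x > 0)
        \<and> (\<exists>w1 w2. C11_second (\<phi> k) w1 \<and> C11_second (\<psi> k) w2
          \<and> (AE x in lebesgue. - (w1 x + (\<mu>1 x * (1 - 2 * u1 k x) - k * \<omega> x * u2 k x) * \<phi> k x
                                 + k * \<omega> x * u1 k x * \<psi> k x) = lam k * \<phi> k x)
          \<and> (AE x in lebesgue. - (\<alpha> * k * \<omega> x * u2 k x * \<phi> k x + d * w2 x
                                 + (\<mu>2 x * (1 - 2 * u2 k x) - \<alpha> * k * \<omega> x * u1 k x) * \<psi> k x)
                              = lam k * \<psi> k x))"
    and norm: "\<forall>k>k0. Sup ((\<lambda>x. \<alpha> * \<phi> k x + d * \<psi> k x) ` {0..L}) = 1"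
  shows "\<forall>\<epsilon>'>0. \<forall>\<delta>>0. \<exists>kb>k0. \<forall>k\<ge>kb.
           sup_over {x. negpart (v x) > \<epsilon>'} (\<phi> k) + sup_over {x. pospart (v x) > \<epsilon>'} (\<psi> k) \<le> \<delta>"
proof (intro allI impI)
  fix \<epsilon>' \<delta> :: real
  assume "\<epsilon>' > 0" and "\<delta> > 0"
  obtain wv where "C11_second v wv" using v_eq by blast
  then obtain Lv Bv where v_lip: "\<forall>x y. \<bar>v x - v y\<bar> \<le> Lv * \<bar>x - y\<bar>" and v_bound: "\<And>x. \<bar>v x\<bar> \<le> Bv"
    using L_periodic_C11_lipschitz_bounded[OF L v_per] by blast
  have "0 \<le> Lv" "0 \<le> Bv" using v_lip[rule_format, of 0 1] v_bound[of 0] by auto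
  obtain Bm \<omega>0 \<omega>1 where \<mu>_bounds: "\<And>x. \<bar>\<mu>1 x\<bar> \<le> Bm" "\<And>x. \<bar>\<mu>2 x\<bar> \<le> Bm"
    and \<omega>_bounds: "\<And>x. \<omega>0 \<le> \<omega> x \<and> \<omega> x \<le> \<omega>1" and "0 < \<omega>0"
    using periodic_coefficient_bounds[OF L \<mu>1(2) \<mu>2(2) \<omega>(1) \<omega>(2)[rule_format] \<omega>(3)] by blast
  have "\<omega>0 \<le> \<omega>1" using \<omega>_bounds[of 0] by simp
  define s where "s = \<delta> / 2"
  have "0 < s" unfolding s_def using \<open>\<delta> > 0\<close> by simp
  obtain c r \<theta> where "0 < c" "0 < r" "0 < \<theta>" and c_le: "c + \<theta> \<le> \<epsilon>' / (2 * \<alpha>)" "c + \<theta> \<le> \<epsilon>' / (2 * d)"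
    and r_small: "Lv * r < \<epsilon>' / 2"
    and small: "\<omega>1 * \<theta> * (1 / d) \<le> \<omega>0 * c * s / 2" "\<omega>1 * \<theta> * (1 / \<alpha>) \<le> \<omega>0 * c * s / 2"
    using absorption_thresholds[OF \<open>\<epsilon>' > 0\<close> \<open>0 < s\<close> \<alpha> d \<open>0 < \<omega>0\<close> \<open>\<omega>0 \<le> \<omega>1\<close> \<open>0 \<le> Lv\<close>] by blast
  define U where "U = Bv / \<alpha> + Bv / d + \<theta>"
  have g1: "\<forall>x y. \<bar>pospart (v x) / \<alpha> - pospart (v y) / \<alpha>\<bar> \<le> Lv / \<alpha> * \<bar>x - y\<bar>"
      "\<And>x. \<bar>pospart (v x) / \<alpha>\<bar> \<le> Bv / \<alpha>"
    by (rule lipschitz_bounded_comp_contraction[OF v_lip v_bound \<alpha> pospart_contraction abs_pospart_le])+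
  have g2: "\<forall>x y. \<bar>negpart (v x) / d - negpart (v y) / d\<bar> \<le> Lv / d * \<bar>x - y\<bar>"
      "\<And>x. \<bar>negpart (v x) / d\<bar> \<le> Bv / d"
    by (rule lipschitz_bounded_comp_contraction[OF v_lip v_bound d negpart_contraction abs_negpart_le])+
  have X: "\<forall>\<^sub>F k in at_top. in_X L (u1 k) \<and> in_X L (u2 k)"
    using eventually_gt_at_top[of k0] by eventually_elim (use u_O in \<open>auto simp: O_eps_def\<close>)
  have "\<forall>\<^sub>F k in at_top. k0 < k" by (rule eventually_gt_at_top)
  moreover have "\<forall>\<^sub>F k in at_top. \<forall>x. \<bar>u1 k x - pospart (v x) / \<alpha>\<bar> < \<theta>"
    using X by (intro in_X_tendsto_uniform[OF _ g1 u_lim(1) \<open>0 < \<theta>\<close>]) (auto elim: eventually_mono)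
  moreover have "\<forall>\<^sub>F k in at_top. \<forall>x. \<bar>u2 k x - negpart (v x) / d\<bar> < \<theta>"
    using X by (intro in_X_tendsto_uniform[OF _ g2 u_lim(2) \<open>0 < \<theta>\<close>]) (auto elim: eventually_mono)
  moreover have "\<forall>\<^sub>F k in at_top. 2 * (1 / \<alpha>) / r\<^sup>2 < k * \<omega>0 * c * s / 2 - (Bm * (1 + 2 * \<theta>) + Bm * U) * s"
    using eventually_less_affine_at_top[of "\<omega>0 * c * s / 2" "2 * (1 / \<alpha>) / r\<^sup>2" "(Bm * (1 + 2 * \<theta>) + Bm * U) * s"]
      \<open>0 < \<omega>0\<close> \<open>0 < c\<close> \<open>0 < s\<close>
    by (simp add: algebra_simps)
  moreover have "\<forall>\<^sub>F k in at_top. 2 * (1 / d) / r\<^sup>2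
      < \<alpha> * k / d * \<omega>0 * c * s / 2 - (Bm / d * (1 + 2 * \<theta>) + Bm * U / d) * s"
    using eventually_less_affine_at_top[of "\<alpha> * \<omega>0 * c * s / (2 * d)" "2 * (1 / d) / r\<^sup>2"
        "(Bm / d * (1 + 2 * \<theta>) + Bm * U / d) * s"] \<open>0 < \<omega>0\<close> \<open>0 < c\<close> \<open>0 < s\<close> \<alpha> d
    by (simp add: algebra_simps)
  ultimately have "\<forall>\<^sub>F k in at_top.
      sup_over {x. \<epsilon>' < negpart (v x)} (\<phi> k) + sup_over {x. \<epsilon>' < pospart (v x)} (\<psi> k) \<le> \<delta>"
  proof eventually_elim
    case (elim k)
    then have "k0 < k" and "0 < k" and u1_close: "\<And>x. \<bar>u1 k x - pospart (v x) / \<alpha>\<bar> < \<theta>"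
      and u2_close: "\<And>x. \<bar>u2 k x - negpart (v x) / d\<bar> < \<theta>"
      using k0 by auto
    have "O_eps L \<alpha> d v \<eta> \<epsilon> (u1 k) (u2 k)" using u_O \<open>k0 < k\<close> by blast
    then have "L_periodic L (u1 k)" and u_pos: "\<And>x. 0 < u1 k x" "\<And>x. 0 < u2 k x"
      unfolding O_eps_def in_X_def by auto
    have "0 \<le> Bv / \<alpha>" "0 \<le> Bv / d" using \<open>0 \<le> Bv\<close> \<alpha> d by simp_all
    then have u_bounds: "0 < u1 k x \<and> u1 k x \<le> U" "0 < u2 k x \<and> u2 k x \<le> U" for x
      using u_pos[of x] u1_close[of x] u2_close[of x] g1(2)[of x] g2(2)[of x]
      unfolding U_def abs_less_iff abs_le_iff by linarith+
    obtain wu where wu: "C11_second (u1 k) wu"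
      "AE x in lebesgue. - wu x = \<mu>1 x * (1 - u1 k x) * u1 k x - k * \<omega> x * u1 k x * u2 k x"
      using u_eq \<open>k0 < k\<close> by blast
    obtain w1 w2 where w: "C11_second (\<phi> k) w1" "C11_second (\<psi> k) w2"
      "AE x in lebesgue. - (w1 x + (\<mu>1 x * (1 - 2 * u1 k x) - k * \<omega> x * u2 k x) * \<phi> k x
                              + k * \<omega> x * u1 k x * \<psi> k x) = lam k * \<phi> k x"
      "AE x in lebesgue. - (\<alpha> * k * \<omega> x * u2 k x * \<phi> k x + d * w2 x
                              + (\<mu>2 x * (1 - 2 * u2 k x) - \<alpha> * k * \<omega> x * u1 k x) * \<psi> k x)
                           = lam k * \<psi> k x"
      using eig \<open>k0 < k\<close> by blast
    have eigenfunctions: "L_periodic L (\<phi> k)" "L_periodic L (\<psi> k)" "\<And>x. 0 < \<phi> k x" "\<And>x. 0 < \<psi> k x"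
      using eig \<open>k0 < k\<close> by blast+
    have "sup_over {x. negpart (v x) > \<epsilon>'} (\<phi> k) + sup_over {x. pospart (v x) > \<epsilon>'} (\<psi> k) \<le> 2 * s"
      by (rule eigenfunctions_small_on_sign_sets[OF L \<alpha> d \<open>0 < k\<close> \<mu>_bounds \<omega>_bounds \<open>0 < \<omega>0\<close> v_lip
          \<open>L_periodic L (u1 k)\<close> u_bounds u1_close u2_close wu eigenfunctions w norm[rule_format, OF \<open>k0 < k\<close>]
          \<open>\<epsilon>' > 0\<close> \<open>0 < s\<close> \<open>0 < c\<close> \<open>0 < r\<close> c_le r_small small elim(4,5)])
    then show ?case unfolding s_def by simp
  qed
  then show "\<exists>kb>k0. \<forall>k\<ge>kb.
      sup_over {x. \<epsilon>' < negpart (v x)} (\<phi> k) + sup_over {x. \<epsilon>' < pospart (v x)} (\<psi> k) \<le> \<delta>"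
    by (rule eventually_at_top_beyond)
qed

end
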